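(* Let $n\ge 3$ and $m,k\ge 1$ be integers, let $t,u\in\mathbb{Z}_n$, and let $G_n(t,u)$ denote the set of all $m\times k$ matrices with entries in $\mathbb{Z}_n$ equipped with the binary operation $[a_{ij}]*[b_{ij}]=[(t a_{ij}+u b_{ij}) \bmod n]$. If $t^2\equiv u \pmod n$, then $(G_n(t,u),* )$ is an AG-groupoid, i.e. it satisfies the left invertive law $(A*B)*C=(C*B)*A$ for all $A,B,C\in G_n(t,u)$.
   Context: An AG-groupoid (Abel-Grassmann's groupoid, or left almost semigroup) is a set with a binary operation $*$ satisfying the left invertive law $(a*b)*c=(c*b)*a$ for all elements $a,b,c$. *)

theory Defs
  imports Main
begin

text \<open>An m x k matrix over Z_n is represented as a function nat => nat => int whose
entries at positions i < m, j < k lie in {0..<n} (canonical residues) and which is 0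
outside the index range.\<close>

definition mat_Zn :: "int \<Rightarrow> nat \<Rightarrow> nat \<Rightarrow> (nat \<Rightarrow> nat \<Rightarrow> int) set" where
  "mat_Zn n m k = {A. (\<forall>i j. i < m \<and> j < k \<longrightarrow> A i j \<in> {0..<n})
                    \<and> (\<forall>i j. \<not> (i < m \<and> j < k) \<longrightarrow> A i j = 0)}"

definition G_op :: "int \<Rightarrow> nat \<Rightarrow> nat \<Rightarrow> int \<Rightarrow> int \<Rightarrow>
    (nat \<Rightarrow> nat \<Rightarrow> int) \<Rightarrow> (nat \<Rightarrow> nat \<Rightarrow> int) \<Rightarrow> (nat \<Rightarrow> nat \<Rightarrow> int)" where
  "G_op n m k t u A B = (\<lambda>i j. if i < m \<and> j < k then (t * A i j + u * B i j) mod n else 0)"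

definition AG_groupoid :: "'a set \<Rightarrow> ('a \<Rightarrow> 'a \<Rightarrow> 'a) \<Rightarrow> bool" where
  "AG_groupoid S f \<longleftrightarrow> (\<forall>a\<in>S. \<forall>b\<in>S. f a b \<in> S)
     \<and> (\<forall>a\<in>S. \<forall>b\<in>S. \<forall>c\<in>S. f (f a b) c = f (f c b) a)"

end

theory Submission
  imports Defs
begin

text \<open>Entrywise, \<open>(a*b)*c\<close> reduces modulo \<open>n\<close> to \<open>t\<^sup>2 a + t u b + u c\<close>; replacing \<open>t\<^sup>2\<close> by \<open>u\<close>
  makes this symmetric in \<open>a\<close> and \<open>c\<close>, which is the left invertive law.\<close>

lemma affine_mod_nested:
  fixes n t u a b c :: int
  shows "(t * ((t * a + u * b) mod n) + u * c) mod n = (t\<^sup>2 * a + t * u * b + u * c) mod n"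
proof -
  have "(t * ((t * a + u * b) mod n) + u * c) mod n = (t * (t * a + u * b) + u * c) mod n"
    by (metis mod_add_left_eq mod_mult_right_eq)
  then show ?thesis
    by (simp add: algebra_simps power2_eq_square)
qed

lemma affine_mod_left_invertive:
  fixes n t u a b c :: int
  assumes "t\<^sup>2 mod n = u mod n"
  shows "(t * ((t * a + u * b) mod n) + u * c) mod n = (t * ((t * c + u * b) mod n) + u * a) mod n"
proof -
  have square_by_u: "(t\<^sup>2 * x + y) mod n = (u * x + y) mod n" for x y
    by (metis assms mod_add_left_eq mod_mult_left_eq)
  have "(t\<^sup>2 * a + t * u * b + u * c) mod n = (u * a + t * u * b + u * c) mod n"
    using square_by_u[of a "t * u * b + u * c"] by (simp add: add.assoc)
  also have "\<dots> = (u * c + t * u * b + u * a) mod n"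
    by (simp add: algebra_simps)
  also have "\<dots> = (t\<^sup>2 * c + t * u * b + u * a) mod n"
    using square_by_u[of c "t * u * b + u * a"] by (simp add: add.assoc)
  finally show ?thesis
    by (simp only: affine_mod_nested)
qed

lemma G_op_closed:
  assumes "n > 0"
  shows "G_op n m k t u A B \<in> mat_Zn n m k"
  using assms by (auto simp: mat_Zn_def G_op_def)

lemma G_op_left_invertive:
  assumes "t\<^sup>2 mod n = u mod n"
  shows "G_op n m k t u (G_op n m k t u A B) C = G_op n m k t u (G_op n m k t u C B) A"
  unfolding G_op_def using affine_mod_left_invertive[OF assms] by (auto intro!: ext)

theorem mainTheorem1:
  fixes n :: int and m k :: nat and t u :: int
  assumes "n \<ge> 3" and "m \<ge> 1" and "k \<ge> 1"
    and "t \<in> {0..<n}" and "u \<in> {0..<n}"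
    and "t^2 mod n = u mod n"
  shows "AG_groupoid (mat_Zn n m k) (G_op n m k t u)"
  unfolding AG_groupoid_def
  using G_op_closed[of n] G_op_left_invertive[OF assms(6)] assms(1) by simp

end
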